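(* Fix nonnegative integers $\lambda_2\ge\mu_2\ge\nu_2$. For an integer $\lambda_1\ge\lambda_2$, let $N=\lambda_1+\lambda_2$ and consider the partitions $\lambda=(\lambda_1,\lambda_2)$, $\mu=(N-\mu_2,\mu_2)$, $\nu=(N-\nu_2,\nu_2)$ of $N$. Then $g_{\mu,\nu,\lambda}$ is independent of $\lambda_1$ for all $\lambda_1\ge\mu_2+\nu_2$, and this stable value equals $$p_S(\nu_2,\nu_2+\mu_2-\lambda_2)-p_S(\nu_2,\nu_2+\mu_2-\lambda_2-1)=\begin{cases}\lfloor \ell/2\rfloor+1&\text{if } \ell\ge0,\\ 0&\text{if }\ell<0,\end{cases}\qquad\text{where } \ell=\nu_2+\mu_2-\lambda_2 .$$
   Context: The Kronecker coefficient $g_{\mu,\nu,\lambda}$ (for $\ell(\mu),\ell(\nu)\le2$, $\ell(\lambda)\le4$, same weight, parts padded with zeros) is defined by $s_\lambda(x_1y_1,x_1y_2,x_2y_1,x_2y_2)=\sum_{\mu,\nu}g_{\mu,\nu,\lambda}\,s_\mu(x_1,x_2)s_\nu(y_1,y_2)$, with $s$ the Schur polynomials. For integers $n,m$, $p_S(n,m)$ is the number of $(x_1,\dots,x_4)\in\mathbb{Z}_{\ge0}^4$ with $x_1+x_3+x_4=n$, $x_2+x_3+2x_4=m$ (zero if $n<0$ or $m<0$). *)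

theory Defs
  imports Main
begin

text \<open>Partitions are represented as weakly decreasing lists of naturals (padded with zeros).
  Cells of the Young diagram: row i, column j (0-based).\<close>

definition cells :: "nat list \<Rightarrow> (nat \<times> nat) set" where
  "cells la = {(i, j). i < length la \<and> j < la ! i}"

definition ssyt :: "nat \<Rightarrow> nat list \<Rightarrow> (nat \<times> nat \<Rightarrow> nat) \<Rightarrow> bool" where
  "ssyt n la T \<longleftrightarrow>
     (\<forall>c. c \<notin> cells la \<longrightarrow> T c = 0) \<and>
     (\<forall>c\<in>cells la. 1 \<le> T c \<and> T c \<le> n) \<and>
     (\<forall>i j. (i, j) \<in> cells la \<longrightarrow> (i, Suc j) \<in> cells la \<longrightarrow> T (i, j) \<le> T (i, Suc j)) \<and>
     (\<forall>i j. (i, j) \<in> cells la \<longrightarrow> (Suc i, j) \<in> cells la \<longrightarrow> T (i, j) < T (Suc i, j))"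

definition content :: "nat \<Rightarrow> nat list \<Rightarrow> (nat \<times> nat \<Rightarrow> nat) \<Rightarrow> nat list" where
  "content n la T = map (\<lambda>k. card {c \<in> cells la. T c = Suc k}) [0..<n]"

text \<open>Coefficient of the monomial z^alpha (alpha a list of length n) in the Schur
  polynomial s_la(z_1,...,z_n) = sum over SSYT T of z^(content T).\<close>
definition schur_coeff :: "nat \<Rightarrow> nat list \<Rightarrow> nat list \<Rightarrow> nat" where
  "schur_coeff n la alpha = card {T. ssyt n la T \<and> content n la T = alpha}"

text \<open>Coefficient of x1^a1 x2^a2 y1^b1 y2^b2 in s_la(x1y1, x1y2, x2y1, x2y2).\<close>
definition kron_lhs_coeff :: "nat list \<Rightarrow> nat \<Rightarrow> nat \<Rightarrow> nat \<Rightarrow> nat \<Rightarrow> int" where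
  "kron_lhs_coeff la a1 a2 b1 b2 =
     (\<Sum>(p, q, r, s) \<in> {(p, q, r, s). p + q = a1 \<and> r + s = a2 \<and> p + r = b1 \<and> q + s = b2}.
        int (schur_coeff 4 la [p, q, r, s]))"

definition parts2 :: "nat \<Rightarrow> nat list set" where
  "parts2 N = {[N - k, k] | k. 2 * k \<le> N}"

text \<open>Kronecker coefficient g_{mu,nu,la}: the coefficients in
  s_la(x1y1,x1y2,x2y1,x2y2) = sum_{mu,nu} g_{mu,nu,la} s_mu(x1,x2) s_nu(y1,y2),
  compared coefficientwise (mu, nu ranging over partitions of |la| with at most 2 parts).\<close>
definition kron :: "nat list \<Rightarrow> nat list \<Rightarrow> nat list \<Rightarrow> int" where
  "kron mu nu la =
     (THE g :: nat list \<Rightarrow> nat list \<Rightarrow> int.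
        (\<forall>m v. (m \<notin> parts2 (sum_list la) \<or> v \<notin> parts2 (sum_list la)) \<longrightarrow> g m v = 0) \<and>
        (\<forall>a1 a2 b1 b2. kron_lhs_coeff la a1 a2 b1 b2 =
            (\<Sum>m \<in> parts2 (sum_list la). \<Sum>v \<in> parts2 (sum_list la).
               g m v * int (schur_coeff 2 m [a1, a2]) * int (schur_coeff 2 v [b1, b2])))) mu nu"

definition pS :: "int \<Rightarrow> int \<Rightarrow> int" where
  "pS n m = (if n < 0 \<or> m < 0 then 0 else
     int (card {(x1 :: nat, x2 :: nat, x3 :: nat, x4 :: nat).
                 int x1 + int x3 + int x4 = n \<and> int x2 + int x3 + 2 * int x4 = m}))"

end

theory Submission
  imports Defs
begin

text \<open>
  A semistandard tableau of shape (l1, l2) in the letters 1, ..., 4 is determined by the positions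
  where its rows switch letters, and those of content (a1, ..., a4) correspond to the numbers
  (x, y, z) of 2s, 3s and 4s in the second row, subject to linear inequalities.
  Since s_(N-k,k)(x1, x2) is the sum of the monomials x1^(N-i) x2^i with k \<le> i \<le> N - k, the
  coefficient of x1^(N-a) x2^a y1^(N-b) y2^b on the left-hand side (a, b \<le> N/2) is the cumulative
  sum of g_(N-k,k),(N-j,j),\<lambda> over k \<le> a, j \<le> b, and g is its mixed second difference.
  When a + b \<le> \<lambda>1, summing over the 2 \<times> 2 tables with these margins gives, for the table with
  (2,2)-entry s, the number of compositions x + y + z = \<lambda>2 with x \<le> b - s, y \<le> a - s, z \<le> s.
  Reindexing by (u, v) = (y + s, x + s) turns the cumulative sum into a sum over u \<le> a, v \<le> b
  of the number of admissible s, which is therefore the Kronecker coefficient g at (u, v): it does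
  not involve \<lambda>1 and equals \<lfloor>\<ell>/2\<rfloor> + 1 for \<ell> = u + v - \<lambda>2 \<ge> 0.
  The difference of p_S counts the pairs with x3 + 2 x4 = \<ell>, which gives the same number.
\<close>

section \<open>Weakly increasing rows\<close>

lemma down_closed_eq_lessThan_card:
  assumes "S \<subseteq> {..<n}" and "\<And>i j. j \<in> S \<Longrightarrow> i \<le> j \<Longrightarrow> i \<in> S"
  shows "S = {..<card S}"
proof -
  have "k \<in> S \<longleftrightarrow> k < card S" for k
  proof
    assume "k \<in> S"
    then have "{..k} \<subseteq> S" using assms(2) by auto
    then have "card {..k} \<le> card S"
      using assms(1) by (meson card_mono finite_lessThan finite_subset)
    then show "k < card S" by simp
  next
    assume "k < card S"
    show "k \<in> S"
    proof (rule ccontr)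
      assume "k \<notin> S"
      then have "S \<subseteq> {..<k}" using assms(2) by (metis lessThan_iff not_le_imp_less subsetI)
      then have "card S \<le> k" by (metis card_lessThan card_mono finite_lessThan)
      with \<open>k < card S\<close> show False by simp
    qed
  qed
  then show ?thesis by auto
qed

lemma sorted_prefix_le_iff:
  fixes f :: "nat \<Rightarrow> nat"
  assumes mono: "\<And>j. Suc j < n \<Longrightarrow> f j \<le> f (Suc j)" and "j < n"
  shows "f j \<le> t \<longleftrightarrow> j < card {i. i < n \<and> f i \<le> t}"
proof -
  have "{i. i < n \<and> f i \<le> t} = {..<card {i. i < n \<and> f i \<le> t}}"
  proof (rule down_closed_eq_lessThan_card)
    show "\<And>i j. j \<in> {i. i < n \<and> f i \<le> t} \<Longrightarrow> i \<le> j \<Longrightarrow> i \<in> {i. i < n \<and> f i \<le> t}"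
      using lift_Suc_mono_le_ivl[where N = "{j. Suc j < n}" and f = f] mono by fastforce
  qed auto
  then show ?thesis using \<open>j < n\<close> by blast
qed

lemma card_Collect_less_le: "card {i. i < n \<and> P i} \<le> n"
  by (rule order_trans[OF card_mono[of "{..<n}"]]) auto

definition row_filling :: "nat \<Rightarrow> nat \<Rightarrow> nat \<Rightarrow> nat \<Rightarrow> nat" where
  "row_filling L1 L2 L3 j = (if j < L1 then 1 else if j < L2 then 2 else if j < L3 then 3 else 4)"

lemma sorted_prefix_eq_row_filling:
  fixes f :: "nat \<Rightarrow> nat"
  assumes "\<And>j. Suc j < n \<Longrightarrow> f j \<le> f (Suc j)" and "j < n" and "1 \<le> f j" and "f j \<le> 4"
  shows "f j = row_filling (card {i. i < n \<and> f i \<le> 1}) (card {i. i < n \<and> f i \<le> 2})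
                 (card {i. i < n \<and> f i \<le> 3}) j"
proof -
  note le_iff = sorted_prefix_le_iff[where f = f and n = n, OF assms(1,2)]
  show ?thesis using le_iff[of 1] le_iff[of 2] le_iff[of 3] assms(3,4)
    unfolding row_filling_def by auto
qed

lemma row_filling_level_sets:
  assumes "L1 \<le> L2" "L2 \<le> L3" "L3 \<le> n"
  shows "{j. j < n \<and> row_filling L1 L2 L3 j \<le> 1} = {..<L1}"
    and "{j. j < n \<and> row_filling L1 L2 L3 j \<le> 2} = {..<L2}"
    and "{j. j < n \<and> row_filling L1 L2 L3 j \<le> 3} = {..<L3}"
    and "{j. j < n \<and> row_filling L1 L2 L3 j = 1} = {..<L1}"
    and "{j. j < n \<and> row_filling L1 L2 L3 j = 2} = {L1..<L2}"
    and "{j. j < n \<and> row_filling L1 L2 L3 j = 3} = {L2..<L3}"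
    and "{j. j < n \<and> row_filling L1 L2 L3 j = 4} = {L3..<n}"
  using assms by (auto simp: row_filling_def)

lemmas card_row_filling =
  row_filling_level_sets[THEN arg_cong[where f = card], simplified card_lessThan card_atLeastLessThan]

section \<open>Two-row tableaux in four letters\<close>

lemma cells_two_rows:
  "(i, j) \<in> cells [l1, l2, 0, 0] \<longleftrightarrow> (i = 0 \<and> j < l1) \<or> (i = 1 \<and> j < l2)"
proof -
  have "i < 4 \<longleftrightarrow> i = 0 \<or> i = 1 \<or> i = 2 \<or> i = 3" by auto
  then show ?thesis unfolding cells_def by (auto simp: numeral_eq_Suc)
qed

lemma content_two_rows:
  "content 4 [l1, l2, 0, 0] T =
     map (\<lambda>k. card {j. j < l1 \<and> T (0, j) = Suc k} + card {j. j < l2 \<and> T (1, j) = Suc k}) [0..<4]"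
proof -
  have "card {c \<in> cells [l1, l2, 0, 0]. T c = v} =
      card {j. j < l1 \<and> T (0, j) = v} + card {j. j < l2 \<and> T (1, j) = v}" for v
  proof -
    have "{c \<in> cells [l1, l2, 0, 0]. T c = v} =
        (\<lambda>j. (0, j)) ` {j. j < l1 \<and> T (0, j) = v} \<union> (\<lambda>j. (1, j)) ` {j. j < l2 \<and> T (1, j) = v}"
      by (auto simp: cells_two_rows)
    then show ?thesis by (simp only:) (subst card_Un_disjoint; auto simp: card_image inj_on_def)
  qed
  then show ?thesis unfolding content_def by simp
qed

text \<open>A1 \<le> A2 \<le> A3 are the columns where the first row switches to 2, 3, 4; B2 \<le> B3
  those where the second row, which by column strictness contains no 1, switches to 3, 4.\<close>
definition two_row_tableau :: "nat \<Rightarrow> nat \<Rightarrow> nat \<times> nat \<times> nat \<times> nat \<times> nat \<Rightarrow> nat \<times> nat \<Rightarrow> nat" where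
  "two_row_tableau l1 l2 = (\<lambda>(A1, A2, A3, B2, B3) (i, j).
     if i = 0 \<and> j < l1 then row_filling A1 A2 A3 j
     else if i = 1 \<and> j < l2 then row_filling 0 B2 B3 j else 0)"

definition two_row_breaks :: "nat \<Rightarrow> nat \<Rightarrow> (nat \<times> nat \<times> nat \<times> nat \<times> nat) set" where
  "two_row_breaks l1 l2 = {(A1, A2, A3, B2, B3).
     A1 \<le> A2 \<and> A2 \<le> A3 \<and> A3 \<le> l1 \<and> B2 \<le> B3 \<and> B3 \<le> l2 \<and> B2 \<le> A1 \<and> B3 \<le> A2 \<and> l2 \<le> A3}"

definition breaks_content :: "nat \<Rightarrow> nat \<Rightarrow> nat \<times> nat \<times> nat \<times> nat \<times> nat \<Rightarrow> nat list" where
  "breaks_content l1 l2 = (\<lambda>(A1, A2, A3, B2, B3).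
     [A1, A2 - A1 + B2, A3 - A2 + (B3 - B2), l1 - A3 + (l2 - B3)])"

lemma two_row_tableau_rows:
  "two_row_tableau l1 l2 (A1, A2, A3, B2, B3) (0, j) = (if j < l1 then row_filling A1 A2 A3 j else 0)"
  "two_row_tableau l1 l2 (A1, A2, A3, B2, B3) (Suc 0, j) = (if j < l2 then row_filling 0 B2 B3 j else 0)"
  by (simp_all add: two_row_tableau_def)

lemma ssyt_two_row_tableau:
  assumes "p \<in> two_row_breaks l1 l2"
  shows "ssyt 4 [l1, l2, 0, 0] (two_row_tableau l1 l2 p)"
  using assms unfolding ssyt_def
  by (cases p) (auto simp: cells_two_rows two_row_breaks_def two_row_tableau_def row_filling_def)

lemma content_two_row_tableau:
  assumes "p \<in> two_row_breaks l1 l2"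
  shows "content 4 [l1, l2, 0, 0] (two_row_tableau l1 l2 p) = breaks_content l1 l2 p"
proof -
  obtain A1 A2 A3 B2 B3 where p: "p = (A1, A2, A3, B2, B3)" by (cases p) auto
  have first: "A1 \<le> A2" "A2 \<le> A3" "A3 \<le> l1" and second: "0 \<le> B2" "B2 \<le> B3" "B3 \<le> l2"
    using assms unfolding p two_row_breaks_def by auto
  have "{j. j < l1 \<and> two_row_tableau l1 l2 p (0, j) = v} = {j. j < l1 \<and> row_filling A1 A2 A3 j = v}"
    and "{j. j < l2 \<and> two_row_tableau l1 l2 p (1, j) = v} = {j. j < l2 \<and> row_filling 0 B2 B3 j = v}"
    for v by (auto simp: p two_row_tableau_rows)
  then show ?thesis
    unfolding content_two_rows using card_row_filling[OF first] card_row_filling[OF second]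
    by (simp add: p breaks_content_def upt_rec numeral_eq_Suc)
qed

lemma inj_on_two_row_tableau: "inj_on (two_row_tableau l1 l2) (two_row_breaks l1 l2)"
proof (rule inj_onI)
  fix p q
  assume p_breaks: "p \<in> two_row_breaks l1 l2" and q_breaks: "q \<in> two_row_breaks l1 l2"
    and eq: "two_row_tableau l1 l2 p = two_row_tableau l1 l2 q"
  obtain A1 A2 A3 B2 B3 where p: "p = (A1, A2, A3, B2, B3)" by (cases p) auto
  obtain C1 C2 C3 D2 D3 where q: "q = (C1, C2, C3, D2, D3)" by (cases q) auto
  have A: "A1 \<le> A2" "A2 \<le> A3" "A3 \<le> l1" and C: "C1 \<le> C2" "C2 \<le> C3" "C3 \<le> l1"
    and B: "0 \<le> B2" "B2 \<le> B3" "B3 \<le> l2" and D: "0 \<le> D2" "D2 \<le> D3" "D3 \<le> l2"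
    using p_breaks q_breaks unfolding p q two_row_breaks_def by auto
  have "row_filling A1 A2 A3 j = row_filling C1 C2 C3 j" if "j < l1" for j
    using fun_cong[OF eq, of "(0, j)"] that unfolding p q two_row_tableau_rows by auto
  then have first: "card {j. j < l1 \<and> row_filling A1 A2 A3 j \<le> v} =
      card {j. j < l1 \<and> row_filling C1 C2 C3 j \<le> v}" for v
    by (metis (no_types, lifting))
  have "row_filling 0 B2 B3 j = row_filling 0 D2 D3 j" if "j < l2" for j
    using fun_cong[OF eq, of "(Suc 0, j)"] that unfolding p q two_row_tableau_rows by auto
  then have second: "card {j. j < l2 \<and> row_filling 0 B2 B3 j \<le> v} =
      card {j. j < l2 \<and> row_filling 0 D2 D3 j \<le> v}" for v
    by (metis (no_types, lifting))
  show "p = q"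
    using first[of 1] first[of 2] first[of 3] second[of 2] second[of 3]
    unfolding p q card_row_filling[OF A] card_row_filling[OF C] card_row_filling[OF B]
      card_row_filling[OF D]
    by simp
qed

lemma ssyt_two_rows_in_image:
  assumes "l2 \<le> l1" and T: "ssyt 4 [l1, l2, 0, 0] T"
  shows "T \<in> two_row_tableau l1 l2 ` two_row_breaks l1 l2"
proof -
  have row0_sorted: "T (0, j) \<le> T (0, Suc j)" if "Suc j < l1" for j
    using T that by (auto simp: ssyt_def cells_two_rows)
  have row1_sorted: "T (1, j) \<le> T (1, Suc j)" if "Suc j < l2" for j
    using T that by (auto simp: ssyt_def cells_two_rows)
  have row0_range: "1 \<le> T (0, j) \<and> T (0, j) \<le> 4" if "j < l1" for j
    using T that by (auto simp: ssyt_def cells_two_rows)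
  have row1_range: "1 \<le> T (1, j) \<and> T (1, j) \<le> 4" if "j < l2" for j
    using T that by (auto simp: ssyt_def cells_two_rows)
  have columns: "T (0, j) < T (1, j)" if "j < l2" for j
    using T that \<open>l2 \<le> l1\<close> by (auto simp: ssyt_def cells_two_rows)
  have outside: "T (i, j) = 0" if "\<not> ((i = 0 \<and> j < l1) \<or> (i = 1 \<and> j < l2))" for i j
    using T that by (auto simp: ssyt_def cells_two_rows)
  define A where "A t = card {j. j < l1 \<and> T (0, j) \<le> t}" for t
  define B where "B t = card {j. j < l2 \<and> T (1, j) \<le> t}" for t
  \<comment> \<open>Column strictness: an entry at most t+1 in the second row sits below one at most t.\<close>
  have B_le_A: "B (Suc t) \<le> A t" for t
    unfolding A_def B_def by (rule card_mono) (use columns \<open>l2 \<le> l1\<close> in force)+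
  have "A 0 = 0" using row0_range unfolding A_def by force
  with B_le_A[of 0] have "B 1 = 0" by simp
  have "B 4 = l2"
  proof -
    have "{j. j < l2 \<and> T (1, j) \<le> 4} = {..<l2}" using row1_range by auto
    then show ?thesis unfolding B_def by simp
  qed
  have A_mono: "A s \<le> A t" and B_mono: "B s \<le> B t" if "s \<le> t" for s t
    unfolding A_def B_def using that by (auto intro!: card_mono)
  have "A 3 \<le> l1" "B 3 \<le> l2"
    unfolding A_def B_def by (simp_all add: card_Collect_less_le)
  have first_row: "T (0, j) = row_filling (A 1) (A 2) (A 3) j" if "j < l1" for j
    unfolding A_def using row0_sorted row0_range that by (intro sorted_prefix_eq_row_filling) auto
  have second_row: "T (1, j) = row_filling (B 1) (B 2) (B 3) j" if "j < l2" for j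
    unfolding B_def using row1_sorted row1_range that by (intro sorted_prefix_eq_row_filling) auto
  have breaks: "(A 1, A 2, A 3, B 2, B 3) \<in> two_row_breaks l1 l2"
    using A_mono B_mono B_le_A[of 1] B_le_A[of 2] B_le_A[of 3] \<open>B 4 = l2\<close> \<open>A 3 \<le> l1\<close> \<open>B 3 \<le> l2\<close>
    by (auto simp: two_row_breaks_def numeral_eq_Suc)
  have "T = two_row_tableau l1 l2 (A 1, A 2, A 3, B 2, B 3)"
  proof (rule ext, clarify)
    fix i j
    show "T (i, j) = two_row_tableau l1 l2 (A 1, A 2, A 3, B 2, B 3) (i, j)"
      using first_row second_row outside \<open>B 1 = 0\<close>
      by (cases "i = 0"; cases "i = 1") (auto simp: two_row_tableau_def)
  qed
  with breaks show ?thesis by blast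
qed

lemma schur_coeff_two_rows_eq_card_breaks:
  assumes "l2 \<le> l1"
  shows "schur_coeff 4 [l1, l2, 0, 0] \<alpha> = card {p \<in> two_row_breaks l1 l2. breaks_content l1 l2 p = \<alpha>}"
proof -
  have "{T. ssyt 4 [l1, l2, 0, 0] T \<and> content 4 [l1, l2, 0, 0] T = \<alpha>} =
      two_row_tableau l1 l2 ` {p \<in> two_row_breaks l1 l2. breaks_content l1 l2 p = \<alpha>}"
    using ssyt_two_rows_in_image[OF assms] ssyt_two_row_tableau content_two_row_tableau
    by fastforce
  moreover have "inj_on (two_row_tableau l1 l2) {p \<in> two_row_breaks l1 l2. breaks_content l1 l2 p = \<alpha>}"
    using inj_on_two_row_tableau by (rule inj_on_subset) blast
  ultimately show ?thesis unfolding schur_coeff_def by (simp add: card_image)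
qed

section \<open>Schur coefficients of two-row shapes\<close>

lemma finite_cells: "finite (cells la)"
proof (rule finite_subset)
  show "cells la \<subseteq> {..<length la} \<times> {..<sum_list la}"
    unfolding cells_def using elem_le_sum_list[of _ la] by fastforce
qed simp

lemma content_more_letters:
  assumes "n \<le> m"
  shows "content m la T = content n la T @ map (\<lambda>k. card {c \<in> cells la. T c = Suc k}) [n..<m]"
  unfolding content_def using upt_add_eq_append[of 0 n "m - n"] assms by simp

lemma ssyt_content_more_letters:
  assumes "n \<le> m" and "length \<alpha> = n"
  shows "ssyt m la T \<and> content m la T = \<alpha> @ replicate (m - n) 0 \<longleftrightarrow>
    ssyt n la T \<and> content n la T = \<alpha>"
proof -
  have replicate_iff: "xs = replicate (length xs) x \<longleftrightarrow> (\<forall>y\<in>set xs. y = x)" for xs :: "nat list" and x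
    by (metis in_set_replicate replicate_eqI)
  have "map (\<lambda>k. card {c \<in> cells la. T c = Suc k}) [n..<m] = replicate (m - n) 0 \<longleftrightarrow>
      (\<forall>c\<in>cells la. T c \<le> n \<or> m < T c)"
  proof -
    have "(\<forall>k\<in>{n..<m}. card {c \<in> cells la. T c = Suc k} = 0) \<longleftrightarrow>
        (\<forall>k\<in>{n..<m}. \<forall>c\<in>cells la. T c \<noteq> Suc k)"
      using finite_cells[of la] by auto
    also have "\<dots> \<longleftrightarrow> (\<forall>c\<in>cells la. T c \<le> n \<or> m < T c)"
      by (auto simp: Suc_le_eq) (metis Suc_le_eq atLeastLessThan_iff less_Suc_eq_0_disj not_le)
    finally show ?thesis using replicate_iff[of "map _ [n..<m]" 0] by simp
  qed
  moreover have "length (content n la T) = n" by (simp add: content_def)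
  ultimately show ?thesis
    using assms unfolding content_more_letters[OF assms(1)] ssyt_def by fastforce
qed

lemma schur_coeff_more_letters:
  assumes "n \<le> m" and "length \<alpha> = n"
  shows "schur_coeff m la (\<alpha> @ replicate (m - n) 0) = schur_coeff n la \<alpha>"
  unfolding schur_coeff_def ssyt_content_more_letters[OF assms] ..

lemma cells_append_zeros: "cells (la @ replicate k 0) = cells la"
  unfolding cells_def by (auto simp: nth_append split: if_splits)

lemma schur_coeff_append_zeros: "schur_coeff n (la @ replicate k 0) \<alpha> = schur_coeff n la \<alpha>"
  unfolding schur_coeff_def ssyt_def content_def cells_append_zeros ..

text \<open>(x, y, z) are the numbers of entries 2, 3, 4 in the second row; the second row
  contains no 1, and everything else is forced by the content.\<close>
definition second_row_counts :: "nat \<Rightarrow> nat \<Rightarrow> nat \<Rightarrow> nat \<Rightarrow> nat \<Rightarrow> nat \<Rightarrow> (nat \<times> nat \<times> nat) set" where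
  "second_row_counts l1 l2 a1 a2 a3 a4 = {(x, y, z). x + y + z = l2 \<and>
     x \<le> a1 \<and> x \<le> a2 \<and> y \<le> a3 \<and> z \<le> a4 \<and> 2 * x + y \<le> a1 + a2 \<and> l2 + x + y \<le> a1 + a2 + a3 \<and>
     a1 + a2 + a3 + a4 = l1 + l2}"

definition two_row_kostka :: "nat \<Rightarrow> nat \<Rightarrow> nat \<Rightarrow> nat \<Rightarrow> nat \<Rightarrow> nat \<Rightarrow> nat" where
  "two_row_kostka l1 l2 a1 a2 a3 a4 = card (second_row_counts l1 l2 a1 a2 a3 a4)"

lemma schur_coeff_eq_two_row_kostka:
  assumes "l2 \<le> l1"
  shows "schur_coeff 4 [l1, l2, 0, 0] [a1, a2, a3, a4] = two_row_kostka l1 l2 a1 a2 a3 a4"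
proof -
  let ?breaks = "{p \<in> two_row_breaks l1 l2. breaks_content l1 l2 p = [a1, a2, a3, a4]}"
  have "bij_betw (\<lambda>(A1, A2, A3, B2, B3). (B2, B3 - B2, l2 - B3)) ?breaks
      (second_row_counts l1 l2 a1 a2 a3 a4)"
    by (rule bij_betw_byWitness[where f' = "\<lambda>(x, y, z). (a1, a1 + a2 - x, a1 + a2 + a3 - (x + y), x, x + y)"])
      (auto simp: two_row_breaks_def breaks_content_def second_row_counts_def)
  then show ?thesis
    unfolding schur_coeff_two_rows_eq_card_breaks[OF assms] two_row_kostka_def
    by (rule bij_betw_same_card)
qed

text \<open>The Kostka numbers are symmetric in the content; for two rows, explicit involutions of
  the second-row counts exhibit the adjacent transpositions.\<close>
lemma two_row_kostka_swap12: "two_row_kostka l1 l2 a1 a2 a3 a4 = two_row_kostka l1 l2 a2 a1 a3 a4"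
  unfolding two_row_kostka_def second_row_counts_def
  by (rule arg_cong[where f = card]) (auto simp: add.commute add.left_commute)

lemma two_row_kostka_swap23: "two_row_kostka l1 l2 a1 a2 a3 a4 = two_row_kostka l1 l2 a1 a3 a2 a4"
proof -
  let ?m = "\<lambda>(x, y, z). (y - (x + y - a1), x + (x + y - a1), z)"
  have "bij_betw ?m (second_row_counts l1 l2 a1 a2 a3 a4) (second_row_counts l1 l2 a1 a3 a2 a4)"
    by (rule bij_betw_byWitness[where f' = ?m]) (auto simp: second_row_counts_def)
  then show ?thesis unfolding two_row_kostka_def by (rule bij_betw_same_card)
qed

lemma two_row_kostka_swap34: "two_row_kostka l1 l2 a1 a2 a3 a4 = two_row_kostka l1 l2 a1 a2 a4 a3"
proof -
  let ?m = "\<lambda>(x, y, z). (x, z - (2 * x + y + z - (a1 + a2)), y + (2 * x + y + z - (a1 + a2)))"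
  have "bij_betw ?m (second_row_counts l1 l2 a1 a2 a3 a4) (second_row_counts l1 l2 a1 a2 a4 a3)"
    by (rule bij_betw_byWitness[where f' = ?m]) (auto simp: second_row_counts_def)
  then show ?thesis unfolding two_row_kostka_def by (rule bij_betw_same_card)
qed

lemma two_row_kostka_eq_0:
  assumes "a1 + a2 + a3 + a4 \<noteq> l1 + l2"
  shows "two_row_kostka l1 l2 a1 a2 a3 a4 = 0"
proof -
  have "second_row_counts l1 l2 a1 a2 a3 a4 = {}"
    using assms unfolding second_row_counts_def by auto
  then show ?thesis unfolding two_row_kostka_def by simp
qed

lemma schur_coeff_two_letters:
  assumes "l2 \<le> l1"
  shows "schur_coeff 2 [l1, l2] [a1, a2] = (if a1 + a2 = l1 + l2 \<and> l2 \<le> a1 \<and> l2 \<le> a2 then 1 else 0)"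
proof -
  have "second_row_counts l1 l2 a1 a2 0 0 =
      (if a1 + a2 = l1 + l2 \<and> l2 \<le> a1 \<and> l2 \<le> a2 then {(l2, 0, 0)} else {})"
    unfolding second_row_counts_def by auto
  then have "two_row_kostka l1 l2 a1 a2 0 0 =
      (if a1 + a2 = l1 + l2 \<and> l2 \<le> a1 \<and> l2 \<le> a2 then 1 else 0)"
    unfolding two_row_kostka_def by simp
  moreover have "schur_coeff 2 [l1, l2] [a1, a2] = schur_coeff 4 [l1, l2, 0, 0] [a1, a2, 0, 0]"
    using schur_coeff_more_letters[of 2 4 "[a1, a2]" "[l1, l2]"]
      schur_coeff_append_zeros[of 4 "[l1, l2]" 2] by (simp add: numeral_eq_Suc)
  ultimately show ?thesis using schur_coeff_eq_two_row_kostka[OF assms] by simp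
qed

section \<open>The Kronecker expansion\<close>

definition two_by_two_tables :: "nat \<Rightarrow> nat \<Rightarrow> nat \<Rightarrow> nat \<Rightarrow> (nat \<times> nat \<times> nat \<times> nat) set" where
  "two_by_two_tables a1 a2 b1 b2 = {(p, q, r, s). p + q = a1 \<and> r + s = a2 \<and> p + r = b1 \<and> q + s = b2}"

lemma kron_lhs_coeff_eq_sum_kostka:
  assumes "l2 \<le> l1"
  shows "kron_lhs_coeff [l1, l2, 0, 0] a1 a2 b1 b2 =
    (\<Sum>(p, q, r, s) \<in> two_by_two_tables a1 a2 b1 b2. int (two_row_kostka l1 l2 p q r s))"
  unfolding kron_lhs_coeff_def two_by_two_tables_def
  by (simp add: schur_coeff_eq_two_row_kostka[OF assms])

lemma kron_lhs_coeff_swap_x: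
  assumes "l2 \<le> l1"
  shows "kron_lhs_coeff [l1, l2, 0, 0] a1 a2 b1 b2 = kron_lhs_coeff [l1, l2, 0, 0] a2 a1 b1 b2"
  unfolding kron_lhs_coeff_eq_sum_kostka[OF assms]
  by (rule sum.reindex_bij_witness[where i = "\<lambda>(p, q, r, s). (r, s, p, q)" and j = "\<lambda>(p, q, r, s). (r, s, p, q)"])
    (auto simp: two_by_two_tables_def two_row_kostka_swap12 two_row_kostka_swap23 two_row_kostka_swap34)

lemma kron_lhs_coeff_swap_y:
  assumes "l2 \<le> l1"
  shows "kron_lhs_coeff [l1, l2, 0, 0] a1 a2 b1 b2 = kron_lhs_coeff [l1, l2, 0, 0] a1 a2 b2 b1"
  unfolding kron_lhs_coeff_eq_sum_kostka[OF assms]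
  by (rule sum.reindex_bij_witness[where i = "\<lambda>(p, q, r, s). (q, p, s, r)" and j = "\<lambda>(p, q, r, s). (q, p, s, r)"])
    (auto simp: two_by_two_tables_def two_row_kostka_swap12 two_row_kostka_swap34)

lemma kron_lhs_coeff_eq_0:
  assumes "l2 \<le> l1" and "a1 + a2 \<noteq> l1 + l2 \<or> b1 + b2 \<noteq> l1 + l2"
  shows "kron_lhs_coeff [l1, l2, 0, 0] a1 a2 b1 b2 = 0"
  unfolding kron_lhs_coeff_eq_sum_kostka[OF assms(1)]
  using assms(2) by (intro sum.neutral) (auto simp: two_by_two_tables_def intro!: two_row_kostka_eq_0)

lemma kron_lhs_coeff_normalize:
  assumes "l2 \<le> l1"
  shows "kron_lhs_coeff [l1, l2, 0, 0] a1 a2 b1 b2 =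
    (if a1 + a2 = l1 + l2 \<and> b1 + b2 = l1 + l2
     then kron_lhs_coeff [l1, l2, 0, 0] (l1 + l2 - min a1 a2) (min a1 a2) (l1 + l2 - min b1 b2) (min b1 b2)
     else 0)"
proof (cases "a1 + a2 = l1 + l2 \<and> b1 + b2 = l1 + l2")
  case True
  then have "l1 + l2 - min a1 a2 = max a1 a2" "l1 + l2 - min b1 b2 = max b1 b2" by auto
  moreover have "kron_lhs_coeff [l1, l2, 0, 0] a1 a2 b1 b2 =
      kron_lhs_coeff [l1, l2, 0, 0] (max a1 a2) (min a1 a2) (max b1 b2) (min b1 b2)"
    using kron_lhs_coeff_swap_x[OF assms] kron_lhs_coeff_swap_y[OF assms]
    by (cases "a1 \<le> a2"; cases "b1 \<le> b2") (simp_all add: max_def min_def)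
  ultimately show ?thesis using True by simp
qed (use kron_lhs_coeff_eq_0[OF assms] in auto)

definition mixed_difference :: "(nat \<Rightarrow> nat \<Rightarrow> 'a::ab_group_add) \<Rightarrow> nat \<Rightarrow> nat \<Rightarrow> 'a" where
  "mixed_difference S k j = S (Suc k) (Suc j) - S k (Suc j) - S (Suc k) j + S k j"

lemma sum_mixed_difference:
  "(\<Sum>k<a. \<Sum>j<b. mixed_difference S k j) = S a b - S 0 b - S a 0 + S 0 0"
proof -
  have inner: "(\<Sum>j<b. mixed_difference S k j) = (S (Suc k) b - S k b) - (S (Suc k) 0 - S k 0)" for k
    unfolding mixed_difference_def
    using sum_lessThan_telescope[of "\<lambda>j. S (Suc k) j - S k j" b] by (simp add: algebra_simps)
  have "(\<Sum>k<a. (S (Suc k) b - S k b) - (S (Suc k) 0 - S k 0)) = S a b - S 0 b - S a 0 + S 0 0"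
    using sum_lessThan_telescope[of "\<lambda>k. S k b - S k 0" a] by (simp add: algebra_simps)
  then show ?thesis by (simp only: inner)
qed

lemma mixed_difference_cumulative:
  assumes "\<And>a b. a \<le> Suc k \<Longrightarrow> b \<le> Suc j \<Longrightarrow> S a b = (\<Sum>u<a. \<Sum>v<b. G u v)"
  shows "mixed_difference S k j = G k j"
  unfolding mixed_difference_def using assms by (simp add: sum.distrib[symmetric] algebra_simps)

definition is_kron_expansion :: "nat list \<Rightarrow> (nat list \<Rightarrow> nat list \<Rightarrow> int) \<Rightarrow> bool" where
  "is_kron_expansion la g \<longleftrightarrow>
     (\<forall>m v. (m \<notin> parts2 (sum_list la) \<or> v \<notin> parts2 (sum_list la)) \<longrightarrow> g m v = 0) \<and>
     (\<forall>a1 a2 b1 b2. kron_lhs_coeff la a1 a2 b1 b2 =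
        (\<Sum>m \<in> parts2 (sum_list la). \<Sum>v \<in> parts2 (sum_list la).
           g m v * int (schur_coeff 2 m [a1, a2]) * int (schur_coeff 2 v [b1, b2])))"

lemma kron_eq_The_expansion: "kron mu nu la = (THE g. is_kron_expansion la g) mu nu"
  unfolding kron_def is_kron_expansion_def ..

lemma sum_atMost_rectangle:
  fixes f :: "nat \<Rightarrow> nat \<Rightarrow> 'a::comm_monoid_add"
  assumes "a \<le> M" and "b \<le> M'"
  shows "(\<Sum>k\<le>M. \<Sum>j\<le>M'. if k \<le> a \<and> j \<le> b then f k j else 0) = (\<Sum>k\<le>a. \<Sum>j\<le>b. f k j)"
proof -
  have restrict: "(\<Sum>k\<le>M. if k \<le> m then g k else 0) = (\<Sum>k\<le>m. g k)"
    if "m \<le> M" for g :: "nat \<Rightarrow> 'a" and m M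
  proof -
    have "{k \<in> {..M}. k \<le> m} = {..m}" using that by auto
    then show ?thesis by (simp flip: sum.inter_filter)
  qed
  have "(\<Sum>k\<le>M. \<Sum>j\<le>M'. if k \<le> a \<and> j \<le> b then f k j else 0) =
      (\<Sum>k\<le>M. if k \<le> a then (\<Sum>j\<le>M'. if j \<le> b then f k j else 0) else 0)"
    by (intro sum.cong) auto
  also have "\<dots> = (\<Sum>k\<le>a. \<Sum>j\<le>M'. if j \<le> b then f k j else 0)"
    using assms(1) by (rule restrict)
  also have "\<dots> = (\<Sum>k\<le>a. \<Sum>j\<le>b. f k j)"
    using assms(2) by (simp add: restrict)
  finally show ?thesis .
qed

lemma sum_two_row_schur_products:
  fixes g :: "nat list \<Rightarrow> nat list \<Rightarrow> int"
  shows "(\<Sum>m\<in>parts2 N. \<Sum>v\<in>parts2 N.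
      g m v * int (schur_coeff 2 m [a1, a2]) * int (schur_coeff 2 v [b1, b2])) =
    (if a1 + a2 = N \<and> b1 + b2 = N then (\<Sum>k\<le>min a1 a2. \<Sum>j\<le>min b1 b2. g [N - k, k] [N - j, j]) else 0)"
proof -
  have parts2: "parts2 N = (\<lambda>k. [N - k, k]) ` {..N div 2}"
    unfolding parts2_def by auto
  have inj: "inj_on (\<lambda>k. [N - k, k]) A" for A
    by (auto simp: inj_on_def)
  have schur: "int (schur_coeff 2 [N - k, k] [c1, c2]) = (if c1 + c2 = N \<and> k \<le> min c1 c2 then 1 else 0)"
    if "k \<in> {..N div 2}" for k c1 c2
    using that by (subst schur_coeff_two_letters) auto
  have "(\<Sum>m\<in>parts2 N. \<Sum>v\<in>parts2 N.
      g m v * int (schur_coeff 2 m [a1, a2]) * int (schur_coeff 2 v [b1, b2])) =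
    (\<Sum>k\<le>N div 2. \<Sum>j\<le>N div 2. if a1 + a2 = N \<and> b1 + b2 = N \<and> k \<le> min a1 a2 \<and> j \<le> min b1 b2
       then g [N - k, k] [N - j, j] else 0)"
    unfolding parts2 by (simp add: sum.reindex inj) (intro sum.cong refl, simp add: schur)
  also have "\<dots> = (if a1 + a2 = N \<and> b1 + b2 = N then
      (\<Sum>k\<le>min a1 a2. \<Sum>j\<le>min b1 b2. g [N - k, k] [N - j, j]) else 0)"
  proof (cases "a1 + a2 = N \<and> b1 + b2 = N")
    case True
    then have "min a1 a2 \<le> N div 2" "min b1 b2 \<le> N div 2" by auto
    with True show ?thesis using sum_atMost_rectangle[of "min a1 a2" "N div 2" "min b1 b2" "N div 2"]
      by simp
  qed auto
  finally show ?thesis .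
qed

definition two_row_expansion :: "(nat \<Rightarrow> nat \<Rightarrow> int) \<Rightarrow> nat \<Rightarrow> nat list \<Rightarrow> nat list \<Rightarrow> int" where
  "two_row_expansion S N m v =
     (if m \<in> parts2 N \<and> v \<in> parts2 N then mixed_difference S (m ! 1) (v ! 1) else 0)"

lemma two_row_expansion_at:
  assumes "2 * k \<le> N" and "2 * j \<le> N"
  shows "two_row_expansion S N [N - k, k] [N - j, j] = mixed_difference S k j"
  using assms unfolding two_row_expansion_def parts2_def by auto

lemma is_kron_expansion_cumulative:
  assumes "is_kron_expansion la g" and "2 * a \<le> sum_list la" and "2 * b \<le> sum_list la"
  shows "kron_lhs_coeff la (sum_list la - a) a (sum_list la - b) b =
    (\<Sum>k\<le>a. \<Sum>j\<le>b. g [sum_list la - k, k] [sum_list la - j, j])"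
proof -
  have "min (sum_list la - a) a = a" "min (sum_list la - b) b = b" using assms(2,3) by auto
  then show ?thesis
    using assms(1) assms(2,3) unfolding is_kron_expansion_def sum_two_row_schur_products by auto
qed

context
  fixes la :: "nat list" and S :: "nat \<Rightarrow> nat \<Rightarrow> int"
  assumes S_0: "\<And>b. S 0 b = 0" "\<And>a. S a 0 = 0"
    and kron_lhs_coeff_eq_S: "\<And>a1 a2 b1 b2. kron_lhs_coeff la a1 a2 b1 b2 =
      (if a1 + a2 = sum_list la \<and> b1 + b2 = sum_list la
       then S (Suc (min a1 a2)) (Suc (min b1 b2)) else 0)"
begin

lemma is_kron_expansion_two_row_expansion:
  "is_kron_expansion la (two_row_expansion S (sum_list la))"
  unfolding is_kron_expansion_def
proof (intro conjI allI impI)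
  fix a1 a2 b1 b2
  let ?N = "sum_list la"
  have "(\<Sum>k\<le>min a1 a2. \<Sum>j\<le>min b1 b2. two_row_expansion S ?N [?N - k, k] [?N - j, j]) =
      S (Suc (min a1 a2)) (Suc (min b1 b2))" if "a1 + a2 = ?N" and "b1 + b2 = ?N"
  proof -
    have "(\<Sum>k\<le>min a1 a2. \<Sum>j\<le>min b1 b2. two_row_expansion S ?N [?N - k, k] [?N - j, j]) =
        (\<Sum>k<Suc (min a1 a2). \<Sum>j<Suc (min b1 b2). mixed_difference S k j)"
      using that unfolding lessThan_Suc_atMost by (intro sum.cong refl) (simp add: two_row_expansion_at)
    also have "\<dots> = S (Suc (min a1 a2)) (Suc (min b1 b2))"
      by (simp only: sum_mixed_difference S_0)
    finally show ?thesis .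
  qed
  then show "kron_lhs_coeff la a1 a2 b1 b2 =
      (\<Sum>m\<in>parts2 ?N. \<Sum>v\<in>parts2 ?N. two_row_expansion S ?N m v *
         int (schur_coeff 2 m [a1, a2]) * int (schur_coeff 2 v [b1, b2]))"
    unfolding sum_two_row_schur_products kron_lhs_coeff_eq_S by simp
qed (auto simp: two_row_expansion_def)

lemma is_kron_expansion_eq_mixed_difference:
  assumes "is_kron_expansion la g" and "2 * k \<le> sum_list la" and "2 * j \<le> sum_list la"
  shows "g [sum_list la - k, k] [sum_list la - j, j] = mixed_difference S k j"
proof -
  let ?N = "sum_list la"
  have "S a b = (\<Sum>u<a. \<Sum>w<b. g [?N - u, u] [?N - w, w])" if "a \<le> Suc k" "b \<le> Suc j" for a b
  proof (cases "a = 0 \<or> b = 0")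
    case False
    then obtain a' b' where ab: "a = Suc a'" "b = Suc b'" by (meson not0_implies_Suc)
    with that assms(2,3) have "2 * a' \<le> ?N" "2 * b' \<le> ?N" by auto
    then have "min (?N - a') a' = a'" "min (?N - b') b' = b'" by auto
    with is_kron_expansion_cumulative[OF assms(1) \<open>2 * a' \<le> ?N\<close> \<open>2 * b' \<le> ?N\<close>]
    show ?thesis unfolding ab lessThan_Suc_atMost kron_lhs_coeff_eq_S
      using \<open>2 * a' \<le> ?N\<close> \<open>2 * b' \<le> ?N\<close> by simp
  qed (auto simp: S_0)
  then show ?thesis by (simp add: mixed_difference_cumulative)
qed

lemma kron_two_row_eq_mixed_difference:
  assumes "2 * k \<le> sum_list la" and "2 * j \<le> sum_list la"
  shows "kron [sum_list la - k, k] [sum_list la - j, j] la = mixed_difference S k j"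
proof -
  let ?N = "sum_list la"
  have "(THE g. is_kron_expansion la g) = two_row_expansion S ?N"
  proof (rule the_equality)
    show "is_kron_expansion la (two_row_expansion S ?N)"
      by (rule is_kron_expansion_two_row_expansion)
    fix g assume g: "is_kron_expansion la g"
    show "g = two_row_expansion S ?N"
    proof (intro ext)
      fix m v
      show "g m v = two_row_expansion S ?N m v"
      proof (cases "m \<in> parts2 ?N \<and> v \<in> parts2 ?N")
        case True
        then obtain k' j' where "m = [?N - k', k']" "2 * k' \<le> ?N" and "v = [?N - j', j']" "2 * j' \<le> ?N"
          unfolding parts2_def by auto
        with is_kron_expansion_eq_mixed_difference[OF g] show ?thesis
          by (simp add: two_row_expansion_at)
      qed (use g in \<open>auto simp: is_kron_expansion_def two_row_expansion_def\<close>)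
    qed
  qed
  then show ?thesis
    using assms by (simp add: kron_eq_The_expansion two_row_expansion_at)
qed

end

section \<open>The stable range\<close>

definition bounded_compositions :: "nat \<Rightarrow> nat \<Rightarrow> nat \<Rightarrow> nat \<Rightarrow> (nat \<times> nat \<times> nat) set" where
  "bounded_compositions n q r s = {(x, y, z). x + y + z = n \<and> x \<le> q \<and> y \<le> r \<and> z \<le> s}"

lemma finite_bounded_compositions: "finite (bounded_compositions n q r s)"
proof (rule finite_subset)
  show "bounded_compositions n q r s \<subseteq> {..n} \<times> {..n} \<times> {..n}"
    unfolding bounded_compositions_def by auto
qed simp

lemma second_row_counts_long_first_row:
  assumes "l2 \<le> p" and "p + q + r + s = l1 + l2"
  shows "second_row_counts l1 l2 p q r s = bounded_compositions l2 q r s"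
  using assms unfolding second_row_counts_def bounded_compositions_def by auto

text \<open>For a + b \<le> l1 every table has (1,1)-entry at least l2, so the long first row imposes
  no constraint: this is where the independence of l1 comes from.\<close>
lemma kron_lhs_coeff_stable:
  assumes "l2 \<le> l1" and "a + b \<le> l1"
  shows "kron_lhs_coeff [l1, l2, 0, 0] (l1 + l2 - a) a (l1 + l2 - b) b =
    (\<Sum>s\<le>min a b. int (card (bounded_compositions l2 (b - s) (a - s) s)))"
  unfolding kron_lhs_coeff_eq_sum_kostka[OF assms(1)]
proof (rule sum.reindex_bij_witness[symmetric, where j = "\<lambda>s. (l1 + l2 - a - b + s, b - s, a - s, s)"
      and i = "\<lambda>(p, q, r, s). s"])
  fix s assume "s \<in> {..min a b}"
  then have "two_row_kostka l1 l2 (l1 + l2 - a - b + s) (b - s) (a - s) s =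
      card (bounded_compositions l2 (b - s) (a - s) s)"
    using assms unfolding two_row_kostka_def by (subst second_row_counts_long_first_row) auto
  then show "(case (l1 + l2 - a - b + s, b - s, a - s, s) of (p, q, r, s) \<Rightarrow> int (two_row_kostka l1 l2 p q r s)) =
      int (card (bounded_compositions l2 (b - s) (a - s) s))"
    by simp
qed (use assms in \<open>auto simp: two_by_two_tables_def\<close>)

text \<open>A composition (x, y, z) in the s-th term of kron_lhs_coeff_stable corresponds to
  (u, v) = (y + s, x + s) with u \<le> a and v \<le> b; in these coordinates the conditions
  0 \<le> z \<le> s on z = l2 - (u - s) - (v - s) are the ones below.\<close>
definition stable_kron_set :: "nat \<Rightarrow> nat \<Rightarrow> nat \<Rightarrow> nat set" where
  "stable_kron_set l2 u v = {s. s \<le> u \<and> s \<le> v \<and> u + v \<le> l2 + 2 * s \<and> l2 + s \<le> u + v}"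

lemma finite_stable_kron_set: "finite (stable_kron_set l2 u v)"
  by (rule finite_subset[of _ "{..u}"]) (auto simp: stable_kron_set_def)

lemma sum_card_bounded_compositions:
  "(\<Sum>s\<le>min a b. card (bounded_compositions l2 (b - s) (a - s) s)) =
    (\<Sum>u\<le>a. \<Sum>v\<le>b. card (stable_kron_set l2 u v))"
proof -
  have "(\<Sum>s\<le>min a b. card (bounded_compositions l2 (b - s) (a - s) s)) =
      card (SIGMA s:{..min a b}. bounded_compositions l2 (b - s) (a - s) s)"
    by (simp add: finite_bounded_compositions)
  also have "\<dots> = card (SIGMA uv:{..a} \<times> {..b}. stable_kron_set l2 (fst uv) (snd uv))"
    by (rule bij_betw_same_card[where f = "\<lambda>(s, x, y, z). ((y + s, x + s), s)"],
        rule bij_betw_byWitness[where f' = "\<lambda>((u, v), s). (s, v - s, u - s, l2 - (u - s) - (v - s))"])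
      (auto simp: bounded_compositions_def stable_kron_set_def)
  also have "\<dots> = (\<Sum>u\<le>a. \<Sum>v\<le>b. card (stable_kron_set l2 u v))"
    by (simp add: finite_stable_kron_set sum.cartesian_product split_beta)
  finally show ?thesis .
qed

text \<open>Shifted by one, so that index 0 stands for an empty cumulative sum.\<close>
definition kron_lhs_shifted :: "nat \<Rightarrow> nat \<Rightarrow> nat \<Rightarrow> nat \<Rightarrow> int" where
  "kron_lhs_shifted l1 l2 a b = (if a = 0 \<or> b = 0 then 0 else
     kron_lhs_coeff [l1, l2, 0, 0] (l1 + l2 - (a - 1)) (a - 1) (l1 + l2 - (b - 1)) (b - 1))"

lemma kron_two_row_eq_card_stable_kron_set:
  assumes "l2 \<le> l1" and "mu + nu \<le> l1" and "2 * mu \<le> l1 + l2" and "2 * nu \<le> l1 + l2"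
  shows "kron [l1 + l2 - mu, mu] [l1 + l2 - nu, nu] [l1, l2, 0, 0] = int (card (stable_kron_set l2 mu nu))"
proof -
  have "kron [l1 + l2 - mu, mu] [l1 + l2 - nu, nu] [l1, l2, 0, 0] =
      mixed_difference (kron_lhs_shifted l1 l2) mu nu"
    using kron_two_row_eq_mixed_difference[of "kron_lhs_shifted l1 l2" "[l1, l2, 0, 0]" mu nu]
      kron_lhs_coeff_normalize[OF assms(1)] assms(3,4)
    by (simp add: kron_lhs_shifted_def)
  also have "\<dots> = int (card (stable_kron_set l2 mu nu))"
  proof (rule mixed_difference_cumulative)
    fix a b assume "a \<le> Suc mu" "b \<le> Suc nu"
    show "kron_lhs_shifted l1 l2 a b = (\<Sum>u<a. \<Sum>v<b. int (card (stable_kron_set l2 u v)))"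
    proof (cases "a = 0 \<or> b = 0")
      case False
      then obtain a' b' where "a = Suc a'" "b = Suc b'" by (meson not0_implies_Suc)
      with \<open>a \<le> Suc mu\<close> \<open>b \<le> Suc nu\<close> assms(2) have "a' + b' \<le> l1" by simp
      then have "kron_lhs_shifted l1 l2 a b =
          int (\<Sum>s\<le>min a' b'. card (bounded_compositions l2 (b' - s) (a' - s) s))"
        unfolding kron_lhs_shifted_def using \<open>a = Suc a'\<close> \<open>b = Suc b'\<close>
        by (simp add: kron_lhs_coeff_stable[OF assms(1)])
      also have "\<dots> = (\<Sum>u<a. \<Sum>v<b. int (card (stable_kron_set l2 u v)))"
        unfolding sum_card_bounded_compositions \<open>a = Suc a'\<close> \<open>b = Suc b'\<close> lessThan_Suc_atMost
        by simp
      finally show ?thesis .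
    qed (auto simp: kron_lhs_shifted_def)
  qed
  finally show ?thesis .
qed

lemma card_stable_kron_set:
  assumes "u \<le> l2" and "v \<le> l2"
  shows "card (stable_kron_set l2 u v) = (if l2 \<le> u + v then (u + v - l2) div 2 + 1 else 0)"
proof (cases "l2 \<le> u + v")
  case True
  then have "stable_kron_set l2 u v = {(u + v - l2 + 1) div 2 .. u + v - l2}"
    using assms unfolding stable_kron_set_def by auto
  with True show ?thesis by simp
next
  case False
  then have "stable_kron_set l2 u v = {}" unfolding stable_kron_set_def by auto
  with False show ?thesis by simp
qed

section \<open>The partition function p_S\<close>

lemma pS_eq_card_weighted_pairs:
  assumes "m \<le> n"
  shows "pS (int n) (int m) = int (card {(x3 :: nat, x4 :: nat). x3 + 2 * x4 \<le> m})"
proof -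
  have "card {(x1 :: nat, x2 :: nat, x3 :: nat, x4 :: nat). x1 + x3 + x4 = n \<and> x2 + x3 + 2 * x4 = m} =
      card {(x3 :: nat, x4 :: nat). x3 + 2 * x4 \<le> m}"
    by (rule bij_betw_same_card[where f = "\<lambda>(x1, x2, x3, x4). (x3, x4)"],
        rule bij_betw_byWitness[where f' = "\<lambda>(x3, x4). (n - x3 - x4, m - x3 - 2 * x4, x3, x4)"])
      (use assms in auto)
  moreover have "{(x1 :: nat, x2 :: nat, x3 :: nat, x4 :: nat).
        int x1 + int x3 + int x4 = int n \<and> int x2 + int x3 + 2 * int x4 = int m} =
      {(x1, x2, x3, x4). x1 + x3 + x4 = n \<and> x2 + x3 + 2 * x4 = m}"
    by auto
  ultimately show ?thesis unfolding pS_def by simp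
qed

lemma card_weighted_pairs_eq: "card {(x3 :: nat, x4 :: nat). x3 + 2 * x4 = m} = m div 2 + 1"
proof -
  have "{(x3 :: nat, x4 :: nat). x3 + 2 * x4 = m} = (\<lambda>x4. (m - 2 * x4, x4)) ` {..m div 2}"
    by (auto simp: image_iff)
  moreover have "inj_on (\<lambda>x4. (m - 2 * x4, x4)) {..m div 2}" by (auto simp: inj_on_def)
  ultimately show ?thesis by (simp add: card_image)
qed

lemma card_weighted_pairs_Suc:
  "card {(x3 :: nat, x4 :: nat). x3 + 2 * x4 \<le> Suc j} =
    card {(x3 :: nat, x4 :: nat). x3 + 2 * x4 \<le> j} + (Suc j div 2 + 1)"
proof -
  have "{(x3 :: nat, x4 :: nat). x3 + 2 * x4 \<le> Suc j} =
      {(x3, x4). x3 + 2 * x4 \<le> j} \<union> {(x3, x4). x3 + 2 * x4 = Suc j}"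
    by auto
  moreover have "finite {(x3 :: nat, x4 :: nat). x3 + 2 * x4 \<le> j}"
    and "finite {(x3 :: nat, x4 :: nat). x3 + 2 * x4 = Suc j}"
    by (rule finite_subset[of _ "{..Suc j} \<times> {..Suc j}"]; auto)+
  ultimately show ?thesis
    by (simp only: card_weighted_pairs_eq[symmetric]) (rule card_Un_disjoint; auto)
qed

lemma pS_difference:
  assumes "m \<le> int n"
  shows "pS (int n) m - pS (int n) (m - 1) = (if 0 \<le> m then m div 2 + 1 else 0)"
proof (cases "0 \<le> m")
  case True
  then obtain k where m: "m = int k" by (metis nonneg_int_cases)
  show ?thesis
  proof (cases k)
    case 0
    have "{(x3 :: nat, x4 :: nat). x3 + 2 * x4 \<le> 0} = {(0, 0)}" by auto
    then show ?thesis using pS_eq_card_weighted_pairs[of 0 n] by (simp add: m 0 pS_def)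
  next
    case (Suc j)
    then show ?thesis
      using assms pS_eq_card_weighted_pairs[of k n] pS_eq_card_weighted_pairs[of j n]
      by (simp add: m card_weighted_pairs_Suc zdiv_int)
  qed
qed (simp add: pS_def)

theorem proposition3p7:
  fixes la2 mu2 nu2 :: nat
  assumes "la2 \<ge> mu2" and "mu2 \<ge> nu2"
  shows "(\<forall>la1 la1'. la1 \<ge> la2 \<longrightarrow> la1' \<ge> la2 \<longrightarrow>
            la1 \<ge> mu2 + nu2 \<longrightarrow> la1' \<ge> mu2 + nu2 \<longrightarrow>
            kron [la1 + la2 - mu2, mu2] [la1 + la2 - nu2, nu2] [la1, la2, 0, 0] =
            kron [la1' + la2 - mu2, mu2] [la1' + la2 - nu2, nu2] [la1', la2, 0, 0])
       \<and> (\<forall>la1. la1 \<ge> la2 \<longrightarrow> la1 \<ge> mu2 + nu2 \<longrightarrow>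
            kron [la1 + la2 - mu2, mu2] [la1 + la2 - nu2, nu2] [la1, la2, 0, 0] =
            pS (int nu2) (int nu2 + int mu2 - int la2)
              - pS (int nu2) (int nu2 + int mu2 - int la2 - 1))
       \<and> pS (int nu2) (int nu2 + int mu2 - int la2)
              - pS (int nu2) (int nu2 + int mu2 - int la2 - 1)
         = (let l = int nu2 + int mu2 - int la2 in if l \<ge> 0 then l div 2 + 1 else 0)"
proof -
  define l where "l = int nu2 + int mu2 - int la2"
  have stable: "kron [la1 + la2 - mu2, mu2] [la1 + la2 - nu2, nu2] [la1, la2, 0, 0] =
      (if 0 \<le> l then l div 2 + 1 else 0)"
    if "la1 \<ge> la2" and "la1 \<ge> mu2 + nu2" for la1
    using kron_two_row_eq_card_stable_kron_set[of la2 la1 mu2 nu2]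
      card_stable_kron_set[of mu2 la2 nu2] assms that
    by (auto simp: l_def zdiv_int of_nat_diff)
  have "pS (int nu2) l - pS (int nu2) (l - 1) = (if 0 \<le> l then l div 2 + 1 else 0)"
    using pS_difference[of l nu2] assms unfolding l_def by simp
  with stable show ?thesis unfolding l_def Let_def by simp
qed

end
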